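(* Let $k$ and $M$ be positive integers, and let $M=p_{1}^{e_{1}}p_{2}^{e_{2}}\cdots p_{l}^{e_{l}}$ be the prime factorization of $M$, where $p_1,\dots,p_l$ are distinct primes. For any integers $n,m\geq \max\{e_j \mid 1\leq j\leq l\}$ satisfying $n\equiv m \pmod{\varphi(M)}$, we have \[ L(k,n)\equiv L(k,m)\pmod{M}. \]
   Context: A matrix with entries in $\{0,1\}$ is called lonesum if it is uniquely determined (among $0$-$1$ matrices of the same size) by its row sum vector and column sum vector. For positive integers $k,n$, $L(k,n)$ denotes the number of lonesum matrices of size $k\times n$. $\varphi$ denotes Euler's totient function. *)

theory Defs
  imports "HOL-Number_Theory.Number_Theory"
begin

text \<open>A k x n 0-1 matrix is represented as a function nat => nat => nat with
  entries in {0,1} at positions (i,j), i<k, j<n, and value 0 elsewhere.\<close>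

definition zero_one_matrices :: "nat \<Rightarrow> nat \<Rightarrow> (nat \<Rightarrow> nat \<Rightarrow> nat) set" where
  "zero_one_matrices k n =
     {A. (\<forall>i j. A i j \<in> {0,1}) \<and> (\<forall>i j. \<not> (i < k \<and> j < n) \<longrightarrow> A i j = 0)}"

definition row_sums :: "nat \<Rightarrow> (nat \<Rightarrow> nat \<Rightarrow> nat) \<Rightarrow> nat \<Rightarrow> nat" where
  "row_sums n A i = (\<Sum>j<n. A i j)"

definition col_sums :: "nat \<Rightarrow> (nat \<Rightarrow> nat \<Rightarrow> nat) \<Rightarrow> nat \<Rightarrow> nat" where
  "col_sums k A j = (\<Sum>i<k. A i j)"

definition lonesum :: "nat \<Rightarrow> nat \<Rightarrow> (nat \<Rightarrow> nat \<Rightarrow> nat) \<Rightarrow> bool" where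
  "lonesum k n A \<longleftrightarrow> A \<in> zero_one_matrices k n \<and>
     (\<forall>B \<in> zero_one_matrices k n.
        (\<forall>i<k. row_sums n B i = row_sums n A i) \<and> (\<forall>j<n. col_sums k B j = col_sums k A j)
        \<longrightarrow> B = A)"

definition L :: "nat \<Rightarrow> nat \<Rightarrow> nat" where
  "L k n = card {A. lonesum k n A}"

end

theory Submission imports Defs "HOL-Combinatorics.Transposition" begin

(* A 0-1 matrix is lonesum iff the sets of rows where its columns have a 1 form a chain under
   inclusion: otherwise interchanging a 2x2 submatrix [[1,0],[0,1]] gives another matrix with
   the same line sums, and conversely double counting sum_{j,j'} min(c_j, c_j') shows that a
   matrix with such nested columns is determined by its line sums. Hence L(k,n) is the sum,
   over chains C of subsets of {0..<k}, of the number s_n(C) of surjections {0..<n} -> C.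
   Under the hypotheses on n and m, a^n = a^m (mod M) for every a (Euler's theorem and the
   Chinese remainder theorem), and induction on C using |C|^n = sum_{D <= C} s_n(D) gives
   s_n(C) = s_m(C) (mod M). *)

lemma cong_pow_exponents_prime_power:
  fixes a p e n m :: nat
  assumes "prime p" "e \<le> n" "e \<le> m" "[n = m] (mod totient (p ^ e))"
  shows "[a ^ n = a ^ m] (mod p ^ e)"
proof (cases "p dvd a")
  case True
  then have "p ^ e dvd a ^ n" "p ^ e dvd a ^ m"
    using assms(2,3) by (meson dvd_power_same dvd_trans le_imp_power_dvd)+
  then show ?thesis by (metis cong_0_iff cong_sym cong_trans)
next
  case False
  then have coprime: "coprime (p ^ e) a"
    using prime_imp_coprime[OF assms(1) False] by simp
  have "ord (p ^ e) a dvd totient (p ^ e)"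
    using coprime by (rule order_divides_totient)
  then have "[n = m] (mod ord (p ^ e) a)"
    by (rule cong_dvd_modulus_nat[OF assms(4)])
  then show ?thesis using order_divides_expdiff[OF coprime] by blast
qed

lemma cong_pow_exponents:
  fixes a M n m :: nat
  assumes "M > 0"
    and "\<forall>p \<in> prime_factors M. multiplicity p M \<le> n"
    and "\<forall>p \<in> prime_factors M. multiplicity p M \<le> m"
    and "[n = m] (mod totient M)"
  shows "[a ^ n = a ^ m] (mod M)"
proof -
  have "[a ^ n = a ^ m] (mod (\<Prod>p\<in>prime_factors M. p ^ multiplicity p M))"
  proof (rule coprime_cong_prod_nat)
    fix p q assume "p \<in> prime_factors M" "q \<in> prime_factors M" "p \<noteq> q"
    then show "coprime (p ^ multiplicity p M) (q ^ multiplicity q M)"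
      by (simp add: primes_coprime in_prime_factors_imp_prime)
  next
    fix p assume p: "p \<in> prime_factors M"
    have "totient (p ^ multiplicity p M) dvd totient M"
      by (intro totient_dvd multiplicity_dvd)
    with assms(4) have "[n = m] (mod totient (p ^ multiplicity p M))"
      by (rule cong_dvd_modulus_nat)
    with p assms(2,3) show "[a ^ n = a ^ m] (mod p ^ multiplicity p M)"
      by (intro cong_pow_exponents_prime_power) auto
  qed
  then show ?thesis using prime_factorization_nat[OF assms(1)] by simp
qed

definition surjections :: "'a set \<Rightarrow> 'b set \<Rightarrow> ('a \<Rightarrow> 'b) set" where
  "surjections I C = {f \<in> I \<rightarrow>\<^sub>E C. f ` I = C}"

lemma finite_surjections: "finite I \<Longrightarrow> finite C \<Longrightarrow> finite (surjections I C)"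
  unfolding surjections_def by (simp add: finite_PiE)

lemma surjections_image: "f \<in> surjections I C \<Longrightarrow> f ` I = C"
  unfolding surjections_def by blast

lemma PiE_filter_image_eq_UN_surjections:
  "{f \<in> I \<rightarrow>\<^sub>E S. P (f ` I)} = (\<Union>C \<in> {C. C \<subseteq> S \<and> P C}. surjections I C)"
  unfolding surjections_def by (auto simp: PiE_iff)

lemma card_PiE_filter_image:
  assumes "finite I" "finite S"
  shows "card {f \<in> I \<rightarrow>\<^sub>E S. P (f ` I)} = (\<Sum>C | C \<subseteq> S \<and> P C. card (surjections I C))"
  unfolding PiE_filter_image_eq_UN_surjections using assms
  by (intro card_UN_disjoint) (auto intro: finite_surjections rev_finite_subset dest: surjections_image)

lemma card_power_eq_sum_card_surjections:
  assumes "finite I" "finite C"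
  shows "card C ^ card I = (\<Sum>D \<in> Pow C. card (surjections I D))"
  using card_PiE_filter_image[OF assms, of "\<lambda>_. True"] assms(1) by (simp add: card_PiE Pow_def)

lemma cong_card_surjections:
  fixes M :: nat and I J :: "'a set"
  assumes "finite I" "finite J" "finite C" "M > 0"
    and "\<forall>p \<in> prime_factors M. multiplicity p M \<le> card I"
    and "\<forall>p \<in> prime_factors M. multiplicity p M \<le> card J"
    and "[card I = card J] (mod totient M)"
  shows "[card (surjections I C) = card (surjections J C)] (mod M)"
  using assms(3)
proof (induction C rule: finite_psubset_induct)
  case (psubset C)
  let ?rest = "\<lambda>I. \<Sum>D \<in> Pow C - {C}. card (surjections I D)"
  have split: "card C ^ card I = card (surjections I C) + ?rest I"
    if "finite I" for I :: "'a set"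
    using card_power_eq_sum_card_surjections[OF that psubset.hyps] psubset.hyps
    by (simp add: sum.remove[of _ C])
  have rest: "[?rest I = ?rest J] (mod M)"
    by (intro cong_sum psubset.IH) auto
  have "[card (surjections I C) + ?rest I = card (surjections J C) + ?rest J] (mod M)"
    unfolding split[OF assms(1), symmetric] split[OF assms(2), symmetric]
    using assms(4-7) by (rule cong_pow_exponents)
  also have "[card (surjections J C) + ?rest J = card (surjections J C) + ?rest I] (mod M)"
    using rest by (intro cong_add cong_refl) (rule cong_sym)
  finally show ?case by (simp add: cong_add_rcancel_nat)
qed

lemma card_Int_eq_min_if_comparable:
  assumes "finite P" "finite Q" "P \<subseteq> Q \<or> Q \<subseteq> P"
  shows "card (P \<inter> Q) = min (card P) (card Q)"
  using assms(3) by (elim disjE) (simp_all add: assms(1,2) Int_absorb1 Int_absorb2 card_mono)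

lemma sum_column_products_eq_sum_row_products:
  "(\<Sum>j<n. \<Sum>j'<n. \<Sum>i<k. A i j * B i j') = (\<Sum>i<k. row_sums n A i * row_sums n B i)"
  unfolding row_sums_def sum_product by (simp add: sum.swap[of _ "{..<k}"])

definition column_ones :: "(nat \<Rightarrow> nat \<Rightarrow> nat) \<Rightarrow> nat \<Rightarrow> nat set" where
  "column_ones A j = {i. A i j = 1}"

lemma zero_one_matrices_entry:
  "A \<in> zero_one_matrices k n \<Longrightarrow> A i j = of_bool (i \<in> column_ones A j)"
  unfolding zero_one_matrices_def column_ones_def by auto

lemma zero_one_matrices_outside:
  "A \<in> zero_one_matrices k n \<Longrightarrow> \<not> (i < k \<and> j < n) \<Longrightarrow> A i j = 0"
  unfolding zero_one_matrices_def by auto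


lemma column_ones_subset: "A \<in> zero_one_matrices k n \<Longrightarrow> column_ones A j \<subseteq> {..<k}"
  using zero_one_matrices_outside[of A k n _ j] by (fastforce simp: column_ones_def)

lemma zero_one_matrices_eqI:
  assumes "A \<in> zero_one_matrices k n" "B \<in> zero_one_matrices k n"
    and "\<And>j. j < n \<Longrightarrow> column_ones A j = column_ones B j"
  shows "A = B"
proof (intro ext)
  fix i j show "A i j = B i j"
  proof (cases "j < n")
    case True
    then show ?thesis
      using assms zero_one_matrices_entry[of A k n i j] zero_one_matrices_entry[of B k n i j] by simp
  next
    case False
    then show ?thesis
      using assms(1,2) zero_one_matrices_outside[of A k n i j] zero_one_matrices_outside[of B k n i j]
      by simp
  qed
qed

lemma sum_column_products:
  assumes "A \<in> zero_one_matrices k n" "B \<in> zero_one_matrices k n"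
  shows "(\<Sum>i<k. A i j * B i j') = card (column_ones A j \<inter> column_ones B j')"
proof -
  have "(\<Sum>i<k. A i j * B i j') = (\<Sum>i<k. of_bool (i \<in> column_ones A j \<inter> column_ones B j'))"
    using zero_one_matrices_entry[OF assms(1)] zero_one_matrices_entry[OF assms(2)]
    by (intro sum.cong) auto
  also have "\<dots> = card (column_ones A j \<inter> column_ones B j')"
    using column_ones_subset[OF assms(1), of j] by (auto intro!: arg_cong[where f = card])
  finally show ?thesis .
qed

lemma col_sums_eq_card:
  "A \<in> zero_one_matrices k n \<Longrightarrow> col_sums k A j = card (column_ones A j)"
  using sum_column_products[of A k n A j j] zero_one_matrices_entry[of A k n]
  unfolding col_sums_def by simp

definition interchange ::
    "nat \<Rightarrow> nat \<Rightarrow> nat \<Rightarrow> nat \<Rightarrow> (nat \<Rightarrow> nat \<Rightarrow> nat) \<Rightarrow> nat \<Rightarrow> nat \<Rightarrow> nat" where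
  "interchange i1 i2 j1 j2 A = (\<lambda>i j. if j = j1 \<or> j = j2 then A (transpose i1 i2 i) j else A i j)"

lemma interchange_zero_one:
  assumes "A \<in> zero_one_matrices k n" "i1 < k" "i2 < k"
  shows "interchange i1 i2 j1 j2 A \<in> zero_one_matrices k n"
  using assms unfolding zero_one_matrices_def interchange_def by (auto simp: transpose_def)

lemma col_sums_interchange:
  assumes "i1 < k" "i2 < k"
  shows "col_sums k (interchange i1 i2 j1 j2 A) j = col_sums k A j"
proof (cases "j = j1 \<or> j = j2")
  case True
  have "bij_betw (transpose i1 i2) {..<k} {..<k}"
    using assms by (intro bij_betw_transpose_iff) auto
  then show ?thesis
    using True unfolding col_sums_def interchange_def
    by (simp add: sum.reindex_bij_betw[of _ _ _ "\<lambda>i. A i j"])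
qed (simp add: col_sums_def interchange_def)

lemma row_sums_interchange:
  assumes "j1 < n" "j2 < n" "A i1 j1 = A i2 j2" "A i1 j2 = A i2 j1"
  shows "row_sums n (interchange i1 i2 j1 j2 A) i = row_sums n A i"
proof (cases "i = i1 \<or> i = i2")
  case True
  have "bij_betw (transpose j1 j2) {..<n} {..<n}"
    using assms by (intro bij_betw_transpose_iff) auto
  moreover have "interchange i1 i2 j1 j2 A i j = A i (transpose j1 j2 j)" for j
    using True assms(3,4) unfolding interchange_def by (auto simp: transpose_def)
  ultimately show ?thesis
    unfolding row_sums_def by (simp add: sum.reindex_bij_betw[of _ _ _ "A i"])
next
  case False
  then have "interchange i1 i2 j1 j2 A i = A i"
    unfolding interchange_def by auto
  then show ?thesis
    unfolding row_sums_def by simp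
qed

lemma lonesum_imp_column_chain:
  assumes "lonesum k n A"
  shows "chain\<^sub>\<subseteq> (column_ones A ` {..<n})"
proof (rule ccontr)
  assume "\<not> ?thesis"
  then obtain j1 j2 i1 i2 where j: "j1 < n" "j2 < n"
    and i1: "i1 \<in> column_ones A j1 - column_ones A j2"
    and i2: "i2 \<in> column_ones A j2 - column_ones A j1"
    unfolding chain_subset_def by blast
  have A: "A \<in> zero_one_matrices k n"
    using assms unfolding lonesum_def by blast
  then have i: "i1 < k" "i2 < k"
    using i1 i2 column_ones_subset by blast+
  have entries: "A i1 j1 = 1" "A i2 j2 = 1" "A i1 j2 = 0" "A i2 j1 = 0"
    using i1 i2 zero_one_matrices_entry[OF A] by auto
  have "interchange i1 i2 j1 j2 A = A"
    using assms i j entries unfolding lonesum_def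
    by (simp add: interchange_zero_one row_sums_interchange col_sums_interchange)
  moreover have "interchange i1 i2 j1 j2 A i1 j1 = 0"
    using entries unfolding interchange_def by simp
  ultimately show False
    using entries by simp
qed

lemma column_chain_determined_by_line_sums:
  assumes A: "A \<in> zero_one_matrices k n" and chain: "chain\<^sub>\<subseteq> (column_ones A ` {..<n})"
    and B: "B \<in> zero_one_matrices k n"
    and rows: "\<forall>i<k. row_sums n B i = row_sums n A i"
    and cols: "\<forall>j<n. col_sums k B j = col_sums k A j"
  shows "B = A"
proof -
  let ?a = "column_ones A" and ?b = "column_ones B"
  let ?overlap = "\<lambda>j j'. card (?a j \<inter> ?b j')"
  let ?bound = "\<lambda>j j'. min (card (?a j)) (card (?a j'))"
  have finite: "finite (?a j)" "finite (?b j)" for j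
    using column_ones_subset[OF A, of j] column_ones_subset[OF B, of j] by (auto intro: finite_subset)
  have card_b: "card (?b j) = card (?a j)" if "j < n" for j
    using cols that by (simp add: col_sums_eq_card[OF A] col_sums_eq_card[OF B])
  have overlap_le: "?overlap j j' \<le> ?bound j j'" if "j' < n" for j j'
    using finite card_b[OF that] by (metis Int_lower1 Int_lower2 card_mono min.bounded_iff)
  have "(\<Sum>j<n. \<Sum>j'<n. ?overlap j j') = (\<Sum>i<k. row_sums n A i * row_sums n B i)"
    by (simp add: sum_column_products[OF A B, symmetric] sum_column_products_eq_sum_row_products)
  also have "\<dots> = (\<Sum>i<k. row_sums n A i * row_sums n A i)"
    using rows by simp
  also have "\<dots> = (\<Sum>j<n. \<Sum>j'<n. card (?a j \<inter> ?a j'))"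
    by (simp add: sum_column_products[OF A A, symmetric] sum_column_products_eq_sum_row_products)
  also have "\<dots> = (\<Sum>j<n. \<Sum>j'<n. ?bound j j')"
    using chain finite unfolding chain_subset_def
    by (intro sum.cong refl card_Int_eq_min_if_comparable) auto
  finally have total: "(\<Sum>j<n. \<Sum>j'<n. ?overlap j j') = (\<Sum>j<n. \<Sum>j'<n. ?bound j j')" .
  have "?overlap j j = card (?a j)" if "j < n" for j
  proof -
    have "(\<Sum>j'<n. ?overlap j j') = (\<Sum>j'<n. ?bound j j')"
      using that overlap_le by (intro sum_mono_inv[OF total] sum_mono) auto
    then have "?overlap j j = ?bound j j"
      by (rule sum_mono_inv) (use that overlap_le in auto)
    then show ?thesis by simp
  qed
  then have "?a j = ?b j" if "j < n" for j
    using that finite card_b by (metis Int_lower1 Int_lower2 card_subset_eq)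
  then show ?thesis
    using A B by (intro zero_one_matrices_eqI) auto
qed

lemma lonesum_iff_column_chain:
  "lonesum k n A \<longleftrightarrow> A \<in> zero_one_matrices k n \<and> chain\<^sub>\<subseteq> (column_ones A ` {..<n})"
  using lonesum_imp_column_chain column_chain_determined_by_line_sums unfolding lonesum_def by blast

definition matrix_of_columns :: "nat \<Rightarrow> (nat \<Rightarrow> nat set) \<Rightarrow> nat \<Rightarrow> nat \<Rightarrow> nat" where
  "matrix_of_columns n f = (\<lambda>i j. of_bool (j < n \<and> i \<in> f j))"

lemma column_ones_matrix_of_columns:
  "j < n \<Longrightarrow> column_ones (matrix_of_columns n f) j = f j"
  unfolding column_ones_def matrix_of_columns_def by simp

lemma column_ones_image_matrix_of_columns:
  "column_ones (matrix_of_columns n f) ` {..<n} = f ` {..<n}"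
  by (rule image_cong) (simp_all add: column_ones_matrix_of_columns)

lemma matrix_of_columns_zero_one:
  "f \<in> {..<n} \<rightarrow>\<^sub>E Pow {..<k} \<Longrightarrow> matrix_of_columns n f \<in> zero_one_matrices k n"
  unfolding zero_one_matrices_def matrix_of_columns_def by (auto simp: PiE_iff)

lemma bij_betw_lonesum_column_chains:
  "bij_betw (\<lambda>A. \<lambda>j\<in>{..<n}. column_ones A j) {A. lonesum k n A}
     {f \<in> {..<n} \<rightarrow>\<^sub>E Pow {..<k}. chain\<^sub>\<subseteq> (f ` {..<n})}"
proof (rule bij_betw_byWitness[where f' = "matrix_of_columns n"])
  show "\<forall>A \<in> {A. lonesum k n A}. matrix_of_columns n (\<lambda>j\<in>{..<n}. column_ones A j) = A"
  proof safe
    fix A assume "lonesum k n A"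
    then have A: "A \<in> zero_one_matrices k n"
      by (simp add: lonesum_iff_column_chain)
    show "matrix_of_columns n (\<lambda>j\<in>{..<n}. column_ones A j) = A"
    proof (intro ext)
      fix i j show "matrix_of_columns n (\<lambda>j\<in>{..<n}. column_ones A j) i j = A i j"
        using zero_one_matrices_entry[OF A, of i j] zero_one_matrices_outside[OF A, of i j]
        by (auto simp: matrix_of_columns_def)
    qed
  qed
  show "\<forall>f \<in> {f \<in> {..<n} \<rightarrow>\<^sub>E Pow {..<k}. chain\<^sub>\<subseteq> (f ` {..<n})}.
      (\<lambda>j\<in>{..<n}. column_ones (matrix_of_columns n f) j) = f"
    by (auto simp: column_ones_matrix_of_columns cong: restrict_cong)
  show "(\<lambda>A. \<lambda>j\<in>{..<n}. column_ones A j) ` {A. lonesum k n A}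
      \<subseteq> {f \<in> {..<n} \<rightarrow>\<^sub>E Pow {..<k}. chain\<^sub>\<subseteq> (f ` {..<n})}"
    using column_ones_subset by (fastforce simp: lonesum_iff_column_chain)
  show "matrix_of_columns n ` {f \<in> {..<n} \<rightarrow>\<^sub>E Pow {..<k}. chain\<^sub>\<subseteq> (f ` {..<n})}
      \<subseteq> {A. lonesum k n A}"
    by (auto simp: lonesum_iff_column_chain matrix_of_columns_zero_one column_ones_image_matrix_of_columns)
qed

lemma L_eq_sum_chains:
  "L k n = (\<Sum>C \<in> chains (Pow {..<k}). card (surjections {..<n} C))"
proof -
  have "L k n = card {f \<in> {..<n} \<rightarrow>\<^sub>E Pow {..<k}. chain\<^sub>\<subseteq> (f ` {..<n})}"
    unfolding L_def using bij_betw_lonesum_column_chains by (rule bij_betw_same_card)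
  also have "\<dots> = (\<Sum>C \<in> chains (Pow {..<k}). card (surjections {..<n} C))"
    by (simp add: card_PiE_filter_image chains_def)
  finally show ?thesis .
qed

theorem theorem2p4:
  fixes k M n m :: nat
  assumes "k > 0" and "M > 0" and "n > 0" and "m > 0"
    and "\<forall>p \<in> prime_factors M. multiplicity p M \<le> n"
    and "\<forall>p \<in> prime_factors M. multiplicity p M \<le> m"
    and "[n = m] (mod totient M)"
  shows "[L k n = L k m] (mod M)"
proof -
  have "[card (surjections {..<n} C) = card (surjections {..<m} C)] (mod M)"
    if "C \<in> chains (Pow {..<k})" for C
  proof -
    have "finite C"
      using that unfolding chains_def by (auto intro: finite_subset)
    then show ?thesis
      using assms(2,5-7) by (intro cong_card_surjections) auto
  qed
  then show ?thesis
    unfolding L_eq_sum_chains by (rule cong_sum)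
qed

end
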